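(* Consider the two-layer multi-item order fulfillment problem described in the context with $K\ge 2$ FDCs and any given fixed costs $f_0,f_1,\dots,f_K\ge 0$, and let constants $b>a>0$ bound the variable costs, $a\le c_{k,t}^i\le b$. Then every online fulfillment policy $\mathrm{ALG}$ (deterministic or randomized) satisfies \[\mathfrak{R}(\mathrm{ALG})\ge \max\left\{1,\ \frac{b}{4a},\ \frac14\max_{n\ge 2}\min\left\{n,\ \frac{f_0}{\min_{k\in[K]}f_k+na}\right\}\right\},\] where the inner maximum is over integers $n\ge 2$.
   Context: Problem. There are $n$ items, $K$ front distribution centers (FDCs) indexed by $k\in[K]$, and one regional distribution center (RDC) indexed by $k=0$ with unlimited inventory of every item. FDC $k$ initially holds $I_{k,0}^i\ge 0$ units of item $i$, never replenished. In each period $t=1,\dots,T$ an order $\boldsymbol S_t=(S_t^i)_{i}$ of nonnegative integers arrives; after observing $\boldsymbol S_t$ and the variable costs $c_{k,t}^i$, a policy must immediately and irrevocably choose $m_{k,t}^i\ge 0$ with $\sum_{k=0}^K m_{k,t}^i=S_t^i$ and $m_{k,t}^i\le I_{k,t-1}^i$ ($k\in[K]$), where $I_{k,t}^i=I_{k,0}^i-\sum_{\tau\le t}m_{k,\tau}^i$. Period cost: $\sum_{k=0}^K[f_k\mathbb{I}(\sum_i m_{k,t}^i>0)+\sum_i c_{k,t}^i m_{k,t}^i]$; total cost is the sum over periods. An online policy (possibly randomized) decides in period $t$ using only fixed costs, initial inventories, and orders and variable costs up to period $t$. For an instance $I$ (choice of $n,T$, inventories, variable costs, orders), $\mathrm{ALG}(I)$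 is the (expected) total cost of the policy and $\mathrm{OPT}(I)$ the optimal total cost with full knowledge of $I$. The competitive ratio $\mathfrak R(\mathrm{ALG})$ is the supremum of $\mathrm{ALG}(I)/\mathrm{OPT}(I)$ over all $n,T$, initial inventories, variable costs in $[a,b]$ and order sequences. *)

theory Defs
  imports "HOL-Probability.Probability"
begin

text \<open>Two-layer multi-item order fulfillment. RDC is index 0, FDCs are 1..K.
  Items are indexed by i < n, periods by t in {1..T}.\<close>

datatype inst = Inst
  (n_items: nat)
  (horizon: nat)
  (inv0: "nat \<Rightarrow> nat \<Rightarrow> nat")
  (vcost: "nat \<Rightarrow> nat \<Rightarrow> nat \<Rightarrow> real")  \<comment> \<open>vcost t k i = c_{k,t}^i\<close>
  (orders: "nat \<Rightarrow> nat \<Rightarrow> nat")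

text \<open>Observation of one period: order vector and variable-cost matrix.\<close>
type_synonym obs = "(nat \<Rightarrow> nat) \<times> (nat \<Rightarrow> nat \<Rightarrow> real)"

text \<open>A deterministic online policy: given n, the initial inventories and the list of
  observations of periods 1..t, it returns the decision m_{k,t}^i (as a function of k and i).\<close>
type_synonym policy = "nat \<Rightarrow> (nat \<Rightarrow> nat \<Rightarrow> nat) \<Rightarrow> obs list \<Rightarrow> (nat \<Rightarrow> nat \<Rightarrow> nat)"

definition valid_inst :: "nat \<Rightarrow> real \<Rightarrow> real \<Rightarrow> inst \<Rightarrow> bool" where
  "valid_inst K a b I \<longleftrightarrow>
     (\<forall>t\<in>{1..horizon I}. \<forall>k\<le>K. \<forall>i<n_items I. a \<le> vcost I t k i \<and> vcost I t k i \<le> b)"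

definition feasible_plan :: "nat \<Rightarrow> inst \<Rightarrow> (nat \<Rightarrow> nat \<Rightarrow> nat \<Rightarrow> nat) \<Rightarrow> bool" where
  "feasible_plan K I m \<longleftrightarrow>
     (\<forall>t\<in>{1..horizon I}. \<forall>i<n_items I.
        (\<Sum>k\<le>K. m t k i) = orders I t i \<and>
        (\<forall>k\<in>{1..K}. m t k i + (\<Sum>\<tau>\<in>{1..<t}. m \<tau> k i) \<le> inv0 I k i))"

definition plan_cost :: "nat \<Rightarrow> (nat \<Rightarrow> real) \<Rightarrow> inst \<Rightarrow> (nat \<Rightarrow> nat \<Rightarrow> nat \<Rightarrow> nat) \<Rightarrow> real" where
  "plan_cost K f I m =
     (\<Sum>t\<in>{1..horizon I}. \<Sum>k\<le>K.
        (if (\<Sum>i<n_items I. m t k i) > 0 then f k else 0)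
        + (\<Sum>i<n_items I. vcost I t k i * real (m t k i)))"

definition opt_cost :: "nat \<Rightarrow> (nat \<Rightarrow> real) \<Rightarrow> inst \<Rightarrow> real" where
  "opt_cost K f I = Inf {plan_cost K f I m | m. feasible_plan K I m}"

text \<open>What the policy may see: data restricted to the relevant index ranges.\<close>
definition obs_at :: "nat \<Rightarrow> inst \<Rightarrow> nat \<Rightarrow> obs" where
  "obs_at K I \<tau> = ((\<lambda>i. if i < n_items I then orders I \<tau> i else 0),
                   (\<lambda>k i. if k \<le> K \<and> i < n_items I then vcost I \<tau> k i else 0))"

definition inv_obs :: "nat \<Rightarrow> inst \<Rightarrow> nat \<Rightarrow> nat \<Rightarrow> nat" where
  "inv_obs K I = (\<lambda>k i. if 1 \<le> k \<and> k \<le> K \<and> i < n_items I then inv0 I k i else 0)"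

definition history :: "nat \<Rightarrow> inst \<Rightarrow> nat \<Rightarrow> obs list" where
  "history K I t = map (obs_at K I) [1..<Suc t]"

definition policy_plan :: "nat \<Rightarrow> policy \<Rightarrow> inst \<Rightarrow> (nat \<Rightarrow> nat \<Rightarrow> nat \<Rightarrow> nat)" where
  "policy_plan K \<pi> I = (\<lambda>t. \<pi> (n_items I) (inv_obs K I) (history K I t))"

definition feasible_policy :: "nat \<Rightarrow> real \<Rightarrow> real \<Rightarrow> policy \<Rightarrow> bool" where
  "feasible_policy K a b \<pi> \<longleftrightarrow>
     (\<forall>I. valid_inst K a b I \<longrightarrow> feasible_plan K I (policy_plan K \<pi> I))"

text \<open>A randomized policy: a probability space M of random seeds and, for each seed,
  a deterministic online policy. ALG(I) is the expected total cost.\<close>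
definition alg_cost :: "nat \<Rightarrow> (nat \<Rightarrow> real) \<Rightarrow> 'r measure \<Rightarrow> ('r \<Rightarrow> policy) \<Rightarrow> inst \<Rightarrow> ennreal" where
  "alg_cost K f M \<pi> I = (\<integral>\<^sup>+ \<omega>. ennreal (plan_cost K f I (policy_plan K (\<pi> \<omega>) I)) \<partial>M)"

definition comp_ratio :: "nat \<Rightarrow> (nat \<Rightarrow> real) \<Rightarrow> real \<Rightarrow> real \<Rightarrow> 'r measure \<Rightarrow> ('r \<Rightarrow> policy) \<Rightarrow> ennreal" where
  "comp_ratio K f a b M \<pi> =
     (SUP I\<in>{I. valid_inst K a b I}. alg_cost K f M \<pi> I / ennreal (opt_cost K f I))"

end

theory Submission
  imports Defs
begin

(*
  Both constructions pair two instances that an online policy cannot tell apart in period 1, so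
  every deterministic policy in the support of the randomization takes the same first-period
  decision on both. A bound  L <= c * cost(I) + cost(J)  valid for every such policy survives
  averaging over the random seed, and comparing with explicit offline plans for I and J yields
  L <= r * (c * OPT(I) + OPT(J))  whenever the competitive ratio is a finite r.

  For 1 and b/(4a): one item; FDCs 1 and 2 hold N units each and N units are ordered in each of
  two periods. Both FDCs are cheap in period 1, only FDC j is cheap in period 2. What FDC j ships
  in period 1 is missing in period 2, so the instances j = 1, 2 together cost at least (3a + b) N,
  while each has an offline plan of cost f_1 + f_2 + 2aN. Letting N grow gives 3a + b <= 4ar.

  For the last term: the cheapest FDC k holds one unit of each of n items, and all n are ordered in
  period 1. Either the policy uses the RDC in period 1, paying f_0 on the instance that ends there,
  or it empties FDC k, and then the instance in which item i is reordered alone in period i + 2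
  forces n RDC shipments. Against the offline costs f_k + na and f_0 + na + n(f_k + a) this gives
  min {n, f_0 / (f_k + na)} <= 4r.
*)

lemma valid_inst_vcost_nonneg:
  assumes "valid_inst K a b I" "0 \<le> a" "t \<in> {1..horizon I}" "k \<le> K" "i < n_items I"
  shows "0 \<le> vcost I t k i"
  using assms unfolding valid_inst_def by (meson order_trans)

lemma plan_cost_nonneg:
  assumes "valid_inst K a b I" "0 \<le> a" "\<forall>k\<le>K. f k \<ge> 0"
  shows "0 \<le> plan_cost K f I m"
  unfolding plan_cost_def using assms(3) valid_inst_vcost_nonneg[OF assms(1,2)]
  by (auto intro!: sum_nonneg add_nonneg_nonneg)

lemma plan_cost_ge_variable_cost:
  assumes "\<forall>k\<le>K. f k \<ge> 0"
  shows "(\<Sum>t\<in>{1..horizon I}. \<Sum>k\<le>K. \<Sum>i<n_items I. vcost I t k i * real (m t k i))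
           \<le> plan_cost K f I m"
  unfolding plan_cost_def using assms by (intro sum_mono) (simp add: add_increasing)

lemma plan_cost_ge_rdc_fixed_cost:
  fixes f :: "nat \<Rightarrow> real"
  assumes "valid_inst K a b I" "0 \<le> a" "\<forall>k\<le>K. f k \<ge> 0"
  shows "f 0 * real (card {t \<in> {1..horizon I}. \<exists>i<n_items I. 0 < m t 0 i}) \<le> plan_cost K f I m"
proof -
  let ?used = "\<lambda>t. \<exists>i<n_items I. 0 < m t 0 i"
  let ?period = "\<lambda>t k. (if (\<Sum>i<n_items I. m t k i) > 0 then f k else 0)
                       + (\<Sum>i<n_items I. vcost I t k i * real (m t k i))"
  have "f 0 * real (card {t \<in> {1..horizon I}. ?used t})
        = (\<Sum>t\<in>{1..horizon I}. if ?used t then f 0 else 0)"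
    by (simp flip: sum.inter_filter)
  also have "\<dots> \<le> (\<Sum>t\<in>{1..horizon I}. \<Sum>k\<le>K. ?period t k)"
  proof (intro sum_mono)
    fix t assume t: "t \<in> {1..horizon I}"
    have period_nonneg: "0 \<le> ?period t k" if "k \<le> K" for k
      using assms(3) that valid_inst_vcost_nonneg[OF assms(1,2) t that]
      by (auto intro!: sum_nonneg add_nonneg_nonneg)
    have "?used t \<Longrightarrow> 0 < (\<Sum>i<n_items I. m t 0 i)"
      by (auto simp: sum_pos2)
    moreover have "0 \<le> (\<Sum>i<n_items I. vcost I t 0 i * real (m t 0 i))"
      using valid_inst_vcost_nonneg[OF assms(1,2) t] by (auto intro!: sum_nonneg)
    ultimately have "(if ?used t then f 0 else 0) \<le> ?period t 0"
      using period_nonneg[of 0] by auto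
    also have "\<dots> \<le> (\<Sum>k\<le>K. ?period t k)"
      using period_nonneg by (intro member_le_sum) auto
    finally show "(if ?used t then f 0 else 0) \<le> (\<Sum>k\<le>K. ?period t k)" .
  qed
  finally show ?thesis unfolding plan_cost_def .
qed

lemma plan_cost_single_source_le:
  assumes "\<forall>t\<in>{1..horizon I}. src t \<le> K" "\<forall>k\<le>K. f k \<ge> 0"
  shows "plan_cost K f I (\<lambda>t k i. if k = src t then q t i else 0)
           \<le> (\<Sum>t\<in>{1..horizon I}. f (src t) + (\<Sum>i<n_items I. vcost I t (src t) i * real (q t i)))"
  unfolding plan_cost_def
proof (intro sum_mono)
  fix t assume t: "t \<in> {1..horizon I}"
  let ?src_cost = "(if (\<Sum>i<n_items I. q t i) > 0 then f (src t) else 0)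
                   + (\<Sum>i<n_items I. vcost I t (src t) i * real (q t i))"
  have "(\<Sum>k\<le>K. (if (\<Sum>i<n_items I. if k = src t then q t i else 0) > 0 then f k else 0)
           + (\<Sum>i<n_items I. vcost I t k i * real (if k = src t then q t i else 0)))
        = (\<Sum>k\<le>K. if k = src t then ?src_cost else 0)" (is "?period_cost = _")
    by (intro sum.cong) auto
  also have "\<dots> = ?src_cost"
    using assms(1) t by simp
  also have "\<dots> \<le> f (src t) + (\<Sum>i<n_items I. vcost I t (src t) i * real (q t i))"
    using assms t by auto
  finally show "?period_cost \<le> f (src t) + (\<Sum>i<n_items I. vcost I t (src t) i * real (q t i))" .
qed

lemma
  assumes "feasible_plan K I m" "t \<in> {1..horizon I}" "i < n_items I"
  shows feasible_plan_served: "(\<Sum>k\<le>K. m t k i) = orders I t i"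
    and feasible_plan_stock: "k \<in> {1..K} \<Longrightarrow> m t k i + (\<Sum>\<tau>\<in>{1..<t}. m \<tau> k i) \<le> inv0 I k i"
  using assms unfolding feasible_plan_def by auto

lemma
  assumes "valid_inst K a b I" "0 \<le> a" "\<forall>k\<le>K. f k \<ge> 0" "feasible_plan K I m"
  shows opt_cost_le_plan_cost: "opt_cost K f I \<le> plan_cost K f I m"
    and opt_cost_nonneg: "0 \<le> opt_cost K f I"
proof -
  have "bdd_below {plan_cost K f I m | m. feasible_plan K I m}"
    using plan_cost_nonneg[OF assms(1-3)] by (intro bdd_belowI[of _ 0]) auto
  then show "opt_cost K f I \<le> plan_cost K f I m"
    unfolding opt_cost_def using assms(4) by (intro cInf_lower) auto
  show "0 \<le> opt_cost K f I"
    unfolding opt_cost_def using assms(4) plan_cost_nonneg[OF assms(1-3)]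
    by (intro cInf_greatest) auto
qed

lemma ennreal_le_mult_of_divide_le:
  fixes x :: ennreal
  assumes "x / ennreal y \<le> ennreal r" "0 \<le> y" "0 \<le> r"
  shows "x \<le> ennreal (r * y)"
proof (cases "y = 0")
  case True
  then show ?thesis using assms by (cases "x = 0") (auto simp: top_unique)
next
  case False
  then have "x = x / ennreal y * ennreal y"
    using assms(2) by (simp add: ennreal_divide_times)
  also have "\<dots> \<le> ennreal r * ennreal y"
    using assms(1) by (rule mult_right_mono) simp
  finally show ?thesis
    using assms by (simp add: ennreal_mult)
qed

lemma alg_cost_le_comp_ratio_mult_plan_cost:
  assumes "comp_ratio K f a b M \<pi> = ennreal r" "0 \<le> r"
    and "valid_inst K a b I" "0 \<le> a" "\<forall>k\<le>K. f k \<ge> 0" "feasible_plan K I m"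
  shows "alg_cost K f M \<pi> I \<le> ennreal (r * plan_cost K f I m)"
proof -
  have "alg_cost K f M \<pi> I / ennreal (opt_cost K f I) \<le> ennreal r"
    unfolding assms(1)[symmetric] comp_ratio_def using assms(3) by (intro SUP_upper) simp
  then have "alg_cost K f M \<pi> I \<le> ennreal (r * opt_cost K f I)"
    using opt_cost_nonneg[OF assms(3-6)] assms(2) by (rule ennreal_le_mult_of_divide_le)
  also have "\<dots> \<le> ennreal (r * plan_cost K f I m)"
    using assms(2) opt_cost_le_plan_cost[OF assms(3-6)] by (intro ennreal_leI mult_left_mono)
  finally show ?thesis .
qed

lemma (in prob_space) ennreal_le_nn_integral_combination:
  assumes "X \<in> borel_measurable M" "Y \<in> borel_measurable M" "0 \<le> c"
    and "\<forall>\<omega>\<in>space M. 0 \<le> X \<omega> \<and> 0 \<le> Y \<omega> \<and> L \<le> c * X \<omega> + Y \<omega>"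
  shows "ennreal L \<le> ennreal c * (\<integral>\<^sup>+\<omega>. ennreal (X \<omega>) \<partial>M) + (\<integral>\<^sup>+\<omega>. ennreal (Y \<omega>) \<partial>M)"
proof -
  have "ennreal L = (\<integral>\<^sup>+\<omega>. ennreal L \<partial>M)"
    by (simp add: emeasure_space_1)
  also have "\<dots> \<le> (\<integral>\<^sup>+\<omega>. ennreal c * ennreal (X \<omega>) + ennreal (Y \<omega>) \<partial>M)"
    using assms(3,4) by (intro nn_integral_mono) (simp flip: ennreal_plus ennreal_mult add: ennreal_leI)
  also have "\<dots> = ennreal c * (\<integral>\<^sup>+\<omega>. ennreal (X \<omega>) \<partial>M) + (\<integral>\<^sup>+\<omega>. ennreal (Y \<omega>) \<partial>M)"
    using assms(1,2) by (simp add: nn_integral_add nn_integral_cmult)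
  finally show ?thesis .
qed

lemma le_comp_ratio_mult_of_instance_pair:
  fixes M :: "'r measure" and \<pi> :: "'r \<Rightarrow> policy"
  assumes "prob_space M" and cr: "comp_ratio K f a b M \<pi> = ennreal r" "0 \<le> r"
    and "0 \<le> a" "\<forall>k\<le>K. f k \<ge> 0"
    and meas: "\<forall>I. valid_inst K a b I \<longrightarrow>
           (\<lambda>\<omega>. plan_cost K f I (policy_plan K (\<pi> \<omega>) I)) \<in> borel_measurable M"
    and I: "valid_inst K a b I" "feasible_plan K I mI"
    and J: "valid_inst K a b J" "feasible_plan K J mJ"
    and "0 \<le> c"
    and pointwise: "\<forall>\<omega>\<in>space M. L \<le> c * plan_cost K f I (policy_plan K (\<pi> \<omega>) I)
                                       + plan_cost K f J (policy_plan K (\<pi> \<omega>) J)"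
  shows "L \<le> r * (c * plan_cost K f I mI + plan_cost K f J mJ)"
proof -
  interpret prob_space M by fact
  have "ennreal L \<le> ennreal c * alg_cost K f M \<pi> I + alg_cost K f M \<pi> J"
    unfolding alg_cost_def using meas I(1) J(1) \<open>0 \<le> c\<close> pointwise
      plan_cost_nonneg[OF I(1) assms(4,5)] plan_cost_nonneg[OF J(1) assms(4,5)]
    by (intro ennreal_le_nn_integral_combination) auto
  also have "\<dots> \<le> ennreal c * ennreal (r * plan_cost K f I mI) + ennreal (r * plan_cost K f J mJ)"
    using alg_cost_le_comp_ratio_mult_plan_cost[OF cr _ assms(4,5)] I J
    by (intro add_mono mult_left_mono) auto
  also have "\<dots> = ennreal (r * (c * plan_cost K f I mI + plan_cost K f J mJ))"
    using cr(2) \<open>0 \<le> c\<close> plan_cost_nonneg[OF I(1) assms(4,5)] plan_cost_nonneg[OF J(1) assms(4,5)]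
    by (simp add: ennreal_mult ennreal_plus algebra_simps)
  finally show ?thesis
    using cr(2) \<open>0 \<le> c\<close> plan_cost_nonneg[OF I(1) assms(4,5)] plan_cost_nonneg[OF J(1) assms(4,5)]
    by (simp add: ennreal_le_iff)
qed

lemma policy_plan_eq_if_same_observations:
  assumes "n_items I = n_items J" "inv_obs K I = inv_obs K J"
    and "\<forall>\<tau>\<in>{1..t}. obs_at K I \<tau> = obs_at K J \<tau>"
  shows "policy_plan K p I t = policy_plan K p J t"
proof -
  have "history K I t = history K J t"
    unfolding history_def using assms(3) by (intro map_cong) auto
  then show ?thesis
    unfolding policy_plan_def using assms(1,2) by simp
qed

lemma sum_two_prices:
  fixes w :: "'a \<Rightarrow> real"
  assumes "finite A" "S \<subseteq> A"
  shows "(\<Sum>k\<in>A. (if k \<in> S then a else b) * w k) = b * sum w A - (b - a) * sum w S"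
proof -
  have "(\<Sum>k\<in>A. (if k \<in> S then a else b) * w k) = (\<Sum>k\<in>A. b * w k - (b - a) * (if k \<in> S then w k else 0))"
    by (intro sum.cong) (auto simp: algebra_simps)
  also have "\<dots> = b * sum w A - (b - a) * (\<Sum>k\<in>A. if k \<in> S then w k else 0)"
    by (simp add: sum_subtractf sum_distrib_left)
  also have "(\<Sum>k\<in>A. if k \<in> S then w k else 0) = sum w S"
    using assms by (simp add: Int_absorb1 flip: sum.inter_restrict)
  finally show ?thesis .
qed

lemma le_of_linear_bound:
  fixes c d e :: real
  assumes "\<And>N::nat. c * N \<le> e + d * N"
  shows "c \<le> d"
proof (rule ccontr)
  assume "\<not> c \<le> d"
  then have "0 < c - d"
    by simp
  then obtain N :: nat where "e < real N * (c - d)"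
    using reals_Archimedean3 by blast
  then have "e + d * N < c * N"
    by (simp add: algebra_simps)
  with assms[of N] show False
    by linarith
qed

lemma min_le_of_tradeoff:
  fixes x F D r :: real
  assumes "1 \<le> x" "0 < D" "0 \<le> F" "0 \<le> r" and tradeoff: "x * F \<le> r * (F + 3 * x * D)"
  shows "min x (F / D) \<le> 4 * r"
proof (cases "F \<le> x * D")
  case True
  then have "x * F \<le> x * (4 * r * D)"
    using tradeoff mult_left_mono[OF True assms(4)] by (simp add: algebra_simps)
  then have "F \<le> 4 * r * D"
    using assms(1) by simp
  then show ?thesis
    using assms(2) by (simp add: min.coboundedI2 pos_divide_le_eq)
next
  case False
  then have "x * F \<le> 4 * r * F"
    using tradeoff mult_left_mono[of "3 * x * D" "3 * F" r] assms(4) by (simp add: algebra_simps)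
  moreover have "0 < x * D"
    using assms(1,2) by simp
  then have "0 < F"
    using False by linarith
  ultimately show ?thesis
    by (simp add: min.coboundedI1)
qed

definition two_fdc_inst :: "nat \<Rightarrow> real \<Rightarrow> real \<Rightarrow> nat \<Rightarrow> inst" where
  "two_fdc_inst N a b j = Inst 1 2 (\<lambda>k i. if k \<in> {1, 2} then N else 0)
     (\<lambda>t k i. if k \<in> (if t = 1 then {1, 2} else {j}) then a else b) (\<lambda>t i. N)"

lemma two_fdc_inst_valid: "a \<le> b \<Longrightarrow> valid_inst K a b (two_fdc_inst N a b j)"
  by (auto simp: valid_inst_def two_fdc_inst_def)

lemma two_fdc_inst_same_first_period:
  "policy_plan K p (two_fdc_inst N a b 1) 1 = policy_plan K p (two_fdc_inst N a b 2) 1"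
  by (rule policy_plan_eq_if_same_observations)
    (auto simp: two_fdc_inst_def inv_obs_def obs_at_def fun_eq_iff)

lemma two_fdc_inst_offline_plan:
  fixes N j :: nat
  assumes "2 \<le> K" "j \<in> {1, 2}" "\<forall>k\<le>K. f k \<ge> 0"
  defines "m \<equiv> \<lambda>t k i. if k = (if t = 1 then 3 - j else j) then N else 0"
  shows "feasible_plan K (two_fdc_inst N a b j) m"
    and "plan_cost K f (two_fdc_inst N a b j) m \<le> f 1 + f 2 + 2 * a * real N"
proof -
  have periods: "{1..2::nat} = {1, 2}" "{1..<2::nat} = {1}" by auto
  show "feasible_plan K (two_fdc_inst N a b j) m"
    unfolding feasible_plan_def
  proof (intro ballI allI impI conjI)
    fix t i assume t: "t \<in> {1..horizon (two_fdc_inst N a b j)}"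
    show "(\<Sum>k\<le>K. m t k i) = orders (two_fdc_inst N a b j) t i"
      using assms(1,2) unfolding m_def by (auto simp: two_fdc_inst_def)
    fix k assume "k \<in> {1..K}"
    show "m t k i + (\<Sum>\<tau>\<in>{1..<t}. m \<tau> k i) \<le> inv0 (two_fdc_inst N a b j) k i"
      using t assms(2) unfolding m_def by (auto simp: two_fdc_inst_def periods)
  qed
  let ?I = "two_fdc_inst N a b j" and ?src = "\<lambda>t::nat. if t = 1 then 3 - j else j"
  have "plan_cost K f ?I m
        \<le> (\<Sum>t\<in>{1..horizon ?I}. f (?src t) + (\<Sum>i<n_items ?I. vcost ?I t (?src t) i * real N))"
    unfolding m_def
    by (rule plan_cost_single_source_le) (use assms(1-3) in \<open>auto simp: two_fdc_inst_def\<close>)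
  also have "\<dots> = f 1 + f 2 + 2 * a * real N"
    using assms(2) by (auto simp: two_fdc_inst_def numeral_2_eq_2)
  finally show "plan_cost K f (two_fdc_inst N a b j) m \<le> f 1 + f 2 + 2 * a * real N" .
qed

lemma two_fdc_inst_variable_cost_ge:
  fixes N j :: nat
  assumes "2 \<le> K" "j \<in> {1, 2}" "\<forall>k\<le>K. f k \<ge> 0"
    and feasible: "feasible_plan K (two_fdc_inst N a b j) m"
  shows "2 * b * N - (b - a) * (m 1 1 0 + m 1 2 0 + m 2 j 0) \<le> plan_cost K f (two_fdc_inst N a b j) m"
proof -
  let ?I = "two_fdc_inst N a b j"
  have served: "(\<Sum>k\<le>K. real (m t k 0)) = N" if "t \<in> {1, 2}" for t
    using feasible_plan_served[OF feasible, of t 0] that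
    by (auto simp: two_fdc_inst_def simp flip: of_nat_sum)
  have "j \<le> K"
    using assms(1,2) by auto
  have "(\<Sum>k\<le>K. vcost ?I 1 k 0 * real (m 1 k 0)) = b * N - (b - a) * (m 1 1 0 + m 1 2 0)"
    using sum_two_prices[of "{..K}" "{1, 2}" a b "\<lambda>k. real (m 1 k 0)"] assms(1) served[of 1]
    by (simp add: two_fdc_inst_def)
  moreover have "(\<Sum>k\<le>K. vcost ?I 2 k 0 * real (m 2 k 0)) = b * N - (b - a) * m 2 j 0"
    using sum_two_prices[of "{..K}" "{j}" a b "\<lambda>k. real (m 2 k 0)"] served[of 2] \<open>j \<le> K\<close>
    by (simp add: two_fdc_inst_def)
  moreover have "(\<Sum>t\<in>{1..horizon ?I}. \<Sum>k\<le>K. \<Sum>i<n_items ?I. vcost ?I t k i * real (m t k i))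
                 \<le> plan_cost K f ?I m"
    using assms(3) by (rule plan_cost_ge_variable_cost)
  ultimately show ?thesis
    by (simp add: two_fdc_inst_def numeral_2_eq_2 algebra_simps)
qed

lemma two_fdc_inst_cost_ge:
  fixes N j :: nat
  assumes "2 \<le> K" "j \<in> {1, 2}" "a \<le> b" "\<forall>k\<le>K. f k \<ge> 0"
    and feasible: "feasible_plan K (two_fdc_inst N a b j) m"
  shows "(a + b) * N - (b - a) * (m 1 1 0 + m 1 2 0) + (b - a) * m 1 j 0
           \<le> plan_cost K f (two_fdc_inst N a b j) m"
proof -
  have "m 2 j 0 + (\<Sum>\<tau>\<in>{1..<2}. m \<tau> j 0) \<le> inv0 (two_fdc_inst N a b j) j 0"
    using feasible_plan_stock[OF feasible, of 2 0 j] assms(1,2) by (auto simp: two_fdc_inst_def)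
  then have "m 2 j 0 + m 1 j 0 \<le> N"
    using assms(2) by (auto simp: two_fdc_inst_def numeral_2_eq_2)
  then have "(b - a) * m 2 j 0 \<le> (b - a) * (N - real (m 1 j 0))"
    using assms(3) by (intro mult_left_mono) auto
  then show ?thesis
    using two_fdc_inst_variable_cost_ge[OF assms(1,2,4) feasible] by (simp add: algebra_simps)
qed

lemma two_fdc_inst_pair_cost_ge:
  fixes N :: nat
  assumes "2 \<le> K" "a \<le> b" "\<forall>k\<le>K. f k \<ge> 0"
    and feasible1: "feasible_plan K (two_fdc_inst N a b 1) m1"
    and feasible2: "feasible_plan K (two_fdc_inst N a b 2) m2"
    and same_first_period: "m1 1 = m2 1"
  shows "(3 * a + b) * N \<le> plan_cost K f (two_fdc_inst N a b 1) m1 + plan_cost K f (two_fdc_inst N a b 2) m2"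
proof -
  have "(\<Sum>k\<in>{1, 2}. m1 1 k 0) \<le> (\<Sum>k\<le>K. m1 1 k 0)"
    using assms(1) by (intro sum_mono2) auto
  also have "\<dots> = N"
    using feasible_plan_served[OF feasible1, of 1 0] by (simp add: two_fdc_inst_def)
  finally have "(b - a) * (m1 1 1 0 + m1 1 2 0) \<le> (b - a) * N"
    using assms(2) by (intro mult_left_mono) auto
  then show ?thesis
    using two_fdc_inst_cost_ge[OF assms(1) _ assms(2,3) feasible1]
      two_fdc_inst_cost_ge[OF assms(1) _ assms(2,3) feasible2] same_first_period
    by (simp add: algebra_simps)
qed

definition single_stock_inst :: "nat \<Rightarrow> nat \<Rightarrow> real \<Rightarrow> nat \<Rightarrow> inst" where
  "single_stock_inst n k a T = Inst n T (\<lambda>k' i. if k' = k then 1 else 0) (\<lambda>t k' i. a)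
     (\<lambda>t i. if t = 1 \<or> t = i + 2 then 1 else 0)"

lemma single_stock_inst_valid: "a \<le> b \<Longrightarrow> valid_inst K a b (single_stock_inst n k a T)"
  by (simp add: valid_inst_def single_stock_inst_def)

lemma single_stock_inst_same_first_period:
  "policy_plan K p (single_stock_inst n k a T) 1 = policy_plan K p (single_stock_inst n k a T') 1"
  by (rule policy_plan_eq_if_same_observations)
    (auto simp: single_stock_inst_def inv_obs_def obs_at_def fun_eq_iff)

lemma single_stock_inst_served:
  assumes "k \<in> {1..K}" "feasible_plan K (single_stock_inst n k a T) m"
    and "t \<in> {1..T}" "i < n"
  shows "m t 0 i + m t k i = (if t = 1 \<or> t = i + 2 then 1 else 0)"
proof -
  have "m t k' i = 0" if "k' \<in> {..K} - {0, k}" for k'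
    using feasible_plan_stock[OF assms(2), of t i k'] assms(3,4) that
    by (simp add: single_stock_inst_def)
  then have "(\<Sum>k'\<le>K. m t k' i) = (\<Sum>k'\<in>{0, k}. m t k' i)"
    using assms(1) by (intro sum.mono_neutral_right) auto
  then show ?thesis
    using feasible_plan_served[OF assms(2), of t i] assms
    by (simp add: single_stock_inst_def)
qed

lemma single_stock_inst_rdc_reorder:
  assumes k: "k \<in> {1..K}" and feasible: "feasible_plan K (single_stock_inst n k a (n + 1)) m"
    and "i < n" "m 1 0 i = 0"
  shows "m (i + 2) 0 i = 1"
proof -
  have "m 1 k i = 1"
    using single_stock_inst_served[OF k feasible, of 1 i] assms(3,4) by simp
  moreover have "m 1 k i \<le> (\<Sum>\<tau>\<in>{1..<i + 2}. m \<tau> k i)"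
    by (rule member_le_sum) auto
  ultimately have "m (i + 2) k i = 0"
    using feasible_plan_stock[OF feasible, of "i + 2" i k] assms(3) k
    by (simp add: single_stock_inst_def)
  then show ?thesis
    using single_stock_inst_served[OF k feasible, of "i + 2" i] assms(3) by simp
qed

lemma single_stock_inst_short_offline_plan:
  assumes "k \<in> {1..K}" "\<forall>k\<le>K. f k \<ge> 0"
  shows "feasible_plan K (single_stock_inst n k a 1) (\<lambda>t k' i. if k' = k then 1 else 0)"
    and "plan_cost K f (single_stock_inst n k a 1) (\<lambda>t k' i. if k' = k then 1 else 0) \<le> f k + n * a"
proof -
  show "feasible_plan K (single_stock_inst n k a 1) (\<lambda>t k' i. if k' = k then 1 else 0)"
    using assms(1) unfolding feasible_plan_def by (simp add: single_stock_inst_def)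
  show "plan_cost K f (single_stock_inst n k a 1) (\<lambda>t k' i. if k' = k then 1 else 0) \<le> f k + n * a"
    using plan_cost_single_source_le[of "single_stock_inst n k a 1" "\<lambda>t. k" K f "\<lambda>t i. 1"] assms
    by (simp add: single_stock_inst_def)
qed

lemma single_stock_inst_long_offline_plan_feasible:
  assumes "k \<in> {1..K}"
  shows "feasible_plan K (single_stock_inst n k a (n + 1))
           (\<lambda>t k' i. if k' = (if t = 1 then 0 else k) then (if t = 1 \<or> t = i + 2 then 1 else 0) else 0)"
    (is "feasible_plan K ?I ?m")
  unfolding feasible_plan_def
proof (intro ballI allI impI conjI)
  have from_fdc: "?m \<tau> k i = (if \<tau> = i + 2 then 1 else 0)" for \<tau> i
    using assms by auto
  fix t i assume "t \<in> {1..horizon ?I}" "i < n_items ?I"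
  show "(\<Sum>k'\<le>K. ?m t k' i) = orders ?I t i"
    using assms by (simp add: single_stock_inst_def)
  fix k' assume "k' \<in> {1..K}"
  show "?m t k' i + (\<Sum>\<tau>\<in>{1..<t}. ?m \<tau> k' i) \<le> inv0 ?I k' i"
  proof (cases "k' = k")
    case True
    have "(\<Sum>\<tau>\<in>{1..<t}. ?m \<tau> k' i) = (if i + 2 \<in> {1..<t} then 1 else 0)"
      using True from_fdc by (simp add: sum.delta)
    then show ?thesis
      using True from_fdc[of t i] by (simp add: single_stock_inst_def)
  next
    case False
    then have "?m \<tau> k' i = 0" for \<tau>
      using \<open>k' \<in> {1..K}\<close> by simp
    then show ?thesis
      by simp
  qed
qed

lemma single_stock_inst_long_offline_plan_cost:
  fixes n k :: nat and a :: real
  assumes "k \<in> {1..K}" "\<forall>k\<le>K. f k \<ge> 0"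
  shows "plan_cost K f (single_stock_inst n k a (n + 1))
           (\<lambda>t k' i. if k' = (if t = 1 then 0 else k) then (if t = 1 \<or> t = i + 2 then 1 else 0) else 0)
         \<le> f 0 + n * a + n * (f k + a)"
proof -
  let ?I = "single_stock_inst n k a (n + 1)"
  define period_cost where "period_cost t = f (if t = 1 then 0 else k)
      + (\<Sum>i<n. vcost ?I t (if t = 1 then 0 else k) i * real (if t = 1 \<or> t = i + 2 then 1 else 0))" for t
  have "plan_cost K f ?I
          (\<lambda>t k' i. if k' = (if t = 1 then 0 else k) then (if t = 1 \<or> t = i + 2 then 1 else 0) else 0)
        \<le> (\<Sum>t\<in>{1..n + 1}. period_cost t)"
    unfolding period_cost_def
    using plan_cost_single_source_le[of ?I "\<lambda>t. if t = 1 then 0 else k" K f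
        "\<lambda>t i. if t = 1 \<or> t = i + 2 then 1 else 0"] assms
    by (simp add: single_stock_inst_def)
  also have "\<dots> = period_cost 1 + (\<Sum>t\<in>{2..n + 1}. period_cost t)"
    by (simp add: sum.atLeast_Suc_atMost numeral_2_eq_2)
  also have "\<dots> \<le> (f 0 + n * a) + (\<Sum>t\<in>{2..n + 1}. f k + a)"
  proof (intro add_mono sum_mono)
    show "period_cost 1 \<le> f 0 + n * a"
      by (simp add: period_cost_def single_stock_inst_def)
    fix t assume t: "t \<in> {2..n + 1}"
    have "(\<Sum>i<n. vcost ?I t k i * real (if t = 1 \<or> t = i + 2 then 1 else 0))
          = (\<Sum>i<n. if i = t - 2 then a else 0)"
      using t by (intro sum.cong) (auto simp: single_stock_inst_def)
    also have "\<dots> = a"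
      using t by (simp add: sum.delta less_diff_conv2)
    finally show "period_cost t \<le> f k + a"
      using t by (simp add: period_cost_def)
  qed
  finally show ?thesis
    by simp
qed

lemma single_stock_inst_cost_ge_if_rdc_idle:
  fixes f :: "nat \<Rightarrow> real"
  assumes k: "k \<in> {1..K}" and "0 \<le> a" "\<forall>k\<le>K. f k \<ge> 0"
    and feasible: "feasible_plan K (single_stock_inst n k a (n + 1)) m"
    and rdc_idle: "\<forall>i<n. m 1 0 i = 0"
  shows "n * f 0 \<le> plan_cost K f (single_stock_inst n k a (n + 1)) m"
proof -
  let ?I = "single_stock_inst n k a (n + 1)"
  let ?rdc_periods = "{t \<in> {1..horizon ?I}. \<exists>i<n_items ?I. 0 < m t 0 i}"
  have "{2..n + 1} \<subseteq> ?rdc_periods"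
  proof
    fix t assume "t \<in> {2..n + 1}"
    then have "t = (t - 2) + 2" "t - 2 < n"
      by auto
    then show "t \<in> ?rdc_periods"
      using single_stock_inst_rdc_reorder[OF k feasible, of "t - 2"] rdc_idle
      by (auto simp: single_stock_inst_def)
  qed
  then have "real n \<le> real (card ?rdc_periods)"
    using card_mono[of _ "{2..n + 1}"] by (simp add: single_stock_inst_def)
  then have "n * f 0 \<le> f 0 * real (card ?rdc_periods)"
    using mult_right_mono[of "real n" "real (card ?rdc_periods)" "f 0"] assms(3)
    by (simp add: mult.commute)
  also have "\<dots> \<le> plan_cost K f ?I m"
    by (rule plan_cost_ge_rdc_fixed_cost[OF single_stock_inst_valid[OF order_refl] assms(2,3)])
  finally show ?thesis .
qed

lemma single_stock_inst_pair_cost_ge: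
  fixes f :: "nat \<Rightarrow> real"
  assumes k: "k \<in> {1..K}" and "0 \<le> a" "\<forall>k\<le>K. f k \<ge> 0"
    and feasible1: "feasible_plan K (single_stock_inst n k a 1) m1"
    and feasible2: "feasible_plan K (single_stock_inst n k a (n + 1)) m2"
    and same_first_period: "m1 1 = m2 1"
  shows "n * f 0 \<le> n * plan_cost K f (single_stock_inst n k a 1) m1
                     + plan_cost K f (single_stock_inst n k a (n + 1)) m2"
proof -
  let ?I1 = "single_stock_inst n k a 1" and ?I2 = "single_stock_inst n k a (n + 1)"
  have valid: "valid_inst K a a (single_stock_inst n k a T)" for T
    by (simp add: single_stock_inst_valid)
  have cost_nonneg: "0 \<le> plan_cost K f ?I1 m1" "0 \<le> plan_cost K f ?I2 m2"
    using plan_cost_nonneg[OF valid assms(2,3)] by auto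
  show ?thesis
  proof (cases "\<exists>i<n. 0 < m1 1 0 i")
    case True
    then have rdc_used: "{t \<in> {1..horizon ?I1}. \<exists>i<n_items ?I1. 0 < m1 t 0 i} = {1}"
      by (auto simp: single_stock_inst_def)
    have "f 0 * real (card {t \<in> {1..horizon ?I1}. \<exists>i<n_items ?I1. 0 < m1 t 0 i})
          \<le> plan_cost K f ?I1 m1"
      by (rule plan_cost_ge_rdc_fixed_cost[OF valid assms(2,3)])
    then have "f 0 \<le> plan_cost K f ?I1 m1"
      unfolding rdc_used by simp
    then show ?thesis
      using cost_nonneg(2) by (simp add: add_increasing2 mult_left_mono)
  next
    case False
    then have "n * f 0 \<le> plan_cost K f ?I2 m2"
      using same_first_period
      by (intro single_stock_inst_cost_ge_if_rdc_idle[OF k assms(2,3) feasible2]) (metis not_gr0)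
    then show ?thesis
      using cost_nonneg(1) by (simp add: add_increasing)
  qed
qed

context
  fixes K :: nat and f :: "nat \<Rightarrow> real" and a b r :: real
    and M :: "'r measure" and \<pi> :: "'r \<Rightarrow> policy"
  assumes fdcs: "2 \<le> K" and f_nonneg: "\<forall>k\<le>K. f k \<ge> 0"
    and a_pos: "0 < a" and a_le_b: "a \<le> b"
    and prob: "prob_space M"
    and policies_feasible: "\<forall>\<omega>\<in>space M. feasible_policy K a b (\<pi> \<omega>)"
    and costs_measurable: "\<forall>I. valid_inst K a b I \<longrightarrow>
           (\<lambda>\<omega>. plan_cost K f I (policy_plan K (\<pi> \<omega>) I)) \<in> borel_measurable M"
    and ratio: "comp_ratio K f a b M \<pi> = ennreal r" and r_nonneg: "0 \<le> r"
begin

lemma comp_ratio_ge_two_fdc_bound: "3 * a + b \<le> 4 * a * r"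
proof (rule le_of_linear_bound)
  fix N :: nat
  let ?I = "two_fdc_inst N a b"
  let ?offline = "\<lambda>j t k i. if k = (if t = 1 then 3 - j else j) then N else 0"
  have valid: "valid_inst K a b (?I j)" for j
    using a_le_b by (rule two_fdc_inst_valid)
  let ?online = "\<lambda>\<omega> j. plan_cost K f (?I j) (policy_plan K (\<pi> \<omega>) (?I j))"
  have pointwise: "\<forall>\<omega>\<in>space M. (3 * a + b) * N \<le> 1 * ?online \<omega> 1 + ?online \<omega> 2"
  proof
    fix \<omega> assume "\<omega> \<in> space M"
    then have "feasible_plan K (?I j) (policy_plan K (\<pi> \<omega>) (?I j))" for j
      using policies_feasible valid unfolding feasible_policy_def by blast
    then show "(3 * a + b) * N \<le> 1 * ?online \<omega> 1 + ?online \<omega> 2"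
      using two_fdc_inst_pair_cost_ge[OF fdcs a_le_b f_nonneg] two_fdc_inst_same_first_period
      by simp
  qed
  have offline: "feasible_plan K (?I 1) (?offline 1)" "feasible_plan K (?I 2) (?offline 2)"
    by (rule two_fdc_inst_offline_plan(1)[OF fdcs _ f_nonneg]; simp)+
  have offline_cost: "plan_cost K f (?I 1) (?offline 1) \<le> f 1 + f 2 + 2 * a * N"
    "plan_cost K f (?I 2) (?offline 2) \<le> f 1 + f 2 + 2 * a * N"
    by (rule two_fdc_inst_offline_plan(2)[OF fdcs _ f_nonneg]; simp)+
  have "(3 * a + b) * N \<le> r * (1 * plan_cost K f (?I 1) (?offline 1) + plan_cost K f (?I 2) (?offline 2))"
    by (rule le_comp_ratio_mult_of_instance_pair[OF prob ratio r_nonneg _ f_nonneg costs_measurable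
          valid offline(1) valid offline(2) _ pointwise]) (use a_pos in simp_all)
  also have "\<dots> \<le> r * (2 * (f 1 + f 2 + 2 * a * N))"
    using offline_cost r_nonneg by (intro mult_left_mono) auto
  finally show "(3 * a + b) * N \<le> 2 * r * (f 1 + f 2) + 4 * a * r * N"
    by (simp add: algebra_simps)
qed

lemma comp_ratio_ge_single_stock_bound:
  assumes k: "k \<in> {1..K}" and "1 \<le> n"
  shows "min (real n) (f 0 / (f k + n * a)) \<le> 4 * r"
proof (rule min_le_of_tradeoff)
  let ?I = "single_stock_inst n k a"
  let ?short = "\<lambda>t k' i. if k' = k then 1 else 0"
  let ?long = "\<lambda>t k' i. if k' = (if t = 1 then 0 else k) then (if t = 1 \<or> t = i + 2 then 1 else 0) else 0"
  have valid: "valid_inst K a b (?I T)" for T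
    using a_le_b by (rule single_stock_inst_valid)
  let ?online = "\<lambda>\<omega> T. plan_cost K f (?I T) (policy_plan K (\<pi> \<omega>) (?I T))"
  have pointwise: "\<forall>\<omega>\<in>space M. n * f 0 \<le> n * ?online \<omega> 1 + ?online \<omega> (n + 1)"
  proof
    fix \<omega> assume "\<omega> \<in> space M"
    then have "feasible_plan K (?I T) (policy_plan K (\<pi> \<omega>) (?I T))" for T
      using policies_feasible valid unfolding feasible_policy_def by blast
    then show "n * f 0 \<le> n * ?online \<omega> 1 + ?online \<omega> (n + 1)"
      using single_stock_inst_pair_cost_ge[OF k less_imp_le[OF a_pos] f_nonneg]
        single_stock_inst_same_first_period by simp
  qed
  have "n * f 0 \<le> r * (n * plan_cost K f (?I 1) ?short + plan_cost K f (?I (n + 1)) ?long)"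
    by (rule le_comp_ratio_mult_of_instance_pair[OF prob ratio r_nonneg _ f_nonneg costs_measurable
          valid single_stock_inst_short_offline_plan(1)[OF k f_nonneg]
          valid single_stock_inst_long_offline_plan_feasible[OF k] _ pointwise])
      (use a_pos in simp_all)
  also have "\<dots> \<le> r * (n * (f k + n * a) + (f 0 + n * a + n * (f k + a)))"
    using single_stock_inst_short_offline_plan(2)[OF k f_nonneg, of n a]
      single_stock_inst_long_offline_plan_cost[OF k f_nonneg, of n a] r_nonneg
    by (intro mult_left_mono add_mono) auto
  also have "\<dots> \<le> r * (f 0 + 3 * real n * (f k + n * a))"
  proof -
    have "n * a \<le> n * (n * a)"
      using \<open>1 \<le> n\<close> a_pos by simp
    moreover have "0 \<le> n * f k"
      using f_nonneg k by simp
    ultimately have "n * (f k + n * a) + (f 0 + n * a + n * (f k + a)) \<le> f 0 + 3 * real n * (f k + n * a)"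
      by (simp add: algebra_simps)
    then show ?thesis
      using r_nonneg by (rule mult_left_mono)
  qed
  finally show "n * f 0 \<le> r * (f 0 + 3 * real n * (f k + n * a))" .
  show "0 < f k + n * a"
    using f_nonneg k a_pos \<open>1 \<le> n\<close> by (simp add: add_nonneg_pos)
qed (use assms f_nonneg r_nonneg in auto)

end

theorem theorem2:
  fixes K :: nat and f :: "nat \<Rightarrow> real" and a b :: real
    and M :: "'r measure" and \<pi> :: "'r \<Rightarrow> policy"
  assumes "K \<ge> 2"
    and "\<forall>k\<le>K. f k \<ge> 0"
    and "0 < a" and "a < b"
    and "prob_space M"
    and "\<forall>\<omega>\<in>space M. feasible_policy K a b (\<pi> \<omega>)"
    and "\<forall>I. valid_inst K a b I \<longrightarrow>
           (\<lambda>\<omega>. plan_cost K f I (policy_plan K (\<pi> \<omega>) I)) \<in> borel_measurable M"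
  shows "ennreal (max 1 (max (b / (4 * a))
            ((1/4) * (SUP n\<in>{2::nat..}. min (real n)
                        (f 0 / (Min (f ` {1..K}) + real n * a))))))
         \<le> comp_ratio K f a b M \<pi>"
proof (cases "comp_ratio K f a b M \<pi>" rule: ennreal_cases)
  case (real r)
  note setting = assms(1-3) less_imp_le[OF assms(4)] assms(5-7) real(2,1)
  have "3 * a + b \<le> 4 * a * r"
    by (rule comp_ratio_ge_two_fdc_bound[OF setting])
  then have "4 * a * 1 \<le> 4 * a * r" and "b \<le> 4 * a * r"
    using assms(3,4) by linarith+
  then have "1 \<le> r" and "b / (4 * a) \<le> r"
    using assms(3) by (auto dest: mult_left_le_imp_le simp: pos_divide_le_eq algebra_simps)
  have "Min (f ` {1..K}) \<in> f ` {1..K}"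
    using assms(1) by (intro Min_in) auto
  then obtain k where k: "k \<in> {1..K}" "f k = Min (f ` {1..K})"
    by (metis imageE)
  have "(SUP n\<in>{2::nat..}. min (real n) (f 0 / (Min (f ` {1..K}) + real n * a))) \<le> 4 * r"
    unfolding k(2)[symmetric]
    by (rule cSUP_least) (auto intro: comp_ratio_ge_single_stock_bound[OF setting k(1)])
  with \<open>1 \<le> r\<close> \<open>b / (4 * a) \<le> r\<close> show ?thesis
    unfolding real(2) by (intro ennreal_leI) simp
qed simp

end
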